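(* For every real $M>0$ there exist connected graphs $G$ and $H$, with $H$ a subgraph of $G$, such that $$\frac{\dim(H)}{\dim(G)}>M,\qquad \frac{\mathrm{bdim}(H)}{\mathrm{bdim}(G)}>M,\qquad \frac{\mathrm{adim}(H)}{\mathrm{adim}(G)}>M.$$
   Context: $d(x,y)$ denotes graph distance. A set $S\subseteq V(G)$ is a resolving set if for all distinct $x,y$ there is $z\in S$ with $d(x,z)\ne d(y,z)$. $\dim(G)$ is the minimum size of a resolving set. For an integer $k\ge1$ let $d_k(x,y)=\min\{d(x,y),k+1\}$. A set $A\subseteq V(G)$ is an adjacency resolving set if for all distinct $x,y\in V(G)$ there is $z\in A$ with $d_1(x,z)\ne d_1(y,z)$. $\mathrm{adim}(G)$ is the minimum size of an adjacency resolving set. A function $f:V(G)\to\mathbb{Z}_{\ge 0}$ is a resolving broadcast of $G$ if for all distinct $x,y\in V(G)$ there is $z\in V(G)$ with $f(z)=i>0$ and $d_i(x,z)\ne d_i(y,z)$. The broadcast dimension $\mathrm{bdim}(G)$ is the minimum of $\sum_{v\in V(G)}f(v)$ over all resolving broadcasts $f$ of $G$. *)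

theory Defs
  imports Main "HOL-Library.Extended_Nat"
begin

definition sgraph :: "'a set \<Rightarrow> ('a \<times> 'a) set \<Rightarrow> bool" where
  "sgraph V E \<longleftrightarrow> finite V \<and> E \<subseteq> V \<times> V \<and> sym E \<and> (\<forall>x. (x, x) \<notin> E)"

definition connected_graph :: "'a set \<Rightarrow> ('a \<times> 'a) set \<Rightarrow> bool" where
  "connected_graph V E \<longleftrightarrow> sgraph V E \<and> V \<noteq> {} \<and> (\<forall>x\<in>V. \<forall>y\<in>V. (x, y) \<in> E\<^sup>*)"

definition subgraph :: "'a set \<Rightarrow> ('a \<times> 'a) set \<Rightarrow> 'a set \<Rightarrow> ('a \<times> 'a) set \<Rightarrow> bool" where
  "subgraph VH EH VG EG \<longleftrightarrow> sgraph VH EH \<and> sgraph VG EG \<and> VH \<subseteq> VG \<and> EH \<subseteq> EG"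

text \<open>Graph distance: length of a shortest walk (used only for connected graphs).\<close>
definition gdist :: "('a \<times> 'a) set \<Rightarrow> 'a \<Rightarrow> 'a \<Rightarrow> nat" where
  "gdist E x y = (LEAST n. (x, y) \<in> E ^^ n)"

definition tdist :: "('a \<times> 'a) set \<Rightarrow> nat \<Rightarrow> 'a \<Rightarrow> 'a \<Rightarrow> nat" where
  "tdist E k x y = min (gdist E x y) (k + 1)"

definition resolving_set :: "'a set \<Rightarrow> ('a \<times> 'a) set \<Rightarrow> 'a set \<Rightarrow> bool" where
  "resolving_set V E S \<longleftrightarrow> S \<subseteq> V \<and>
     (\<forall>x\<in>V. \<forall>y\<in>V. x \<noteq> y \<longrightarrow> (\<exists>z\<in>S. gdist E x z \<noteq> gdist E y z))"

definition mdim :: "'a set \<Rightarrow> ('a \<times> 'a) set \<Rightarrow> nat" where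
  "mdim V E = (LEAST n. \<exists>S. resolving_set V E S \<and> card S = n)"

definition adj_resolving_set :: "'a set \<Rightarrow> ('a \<times> 'a) set \<Rightarrow> 'a set \<Rightarrow> bool" where
  "adj_resolving_set V E A \<longleftrightarrow> A \<subseteq> V \<and>
     (\<forall>x\<in>V. \<forall>y\<in>V. x \<noteq> y \<longrightarrow> (\<exists>z\<in>A. tdist E 1 x z \<noteq> tdist E 1 y z))"

definition adim :: "'a set \<Rightarrow> ('a \<times> 'a) set \<Rightarrow> nat" where
  "adim V E = (LEAST n. \<exists>A. adj_resolving_set V E A \<and> card A = n)"

definition resolving_broadcast :: "'a set \<Rightarrow> ('a \<times> 'a) set \<Rightarrow> ('a \<Rightarrow> nat) \<Rightarrow> bool" where
  "resolving_broadcast V E f \<longleftrightarrow> (\<forall>v. v \<notin> V \<longrightarrow> f v = 0) \<and>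
     (\<forall>x\<in>V. \<forall>y\<in>V. x \<noteq> y \<longrightarrow>
        (\<exists>z\<in>V. f z > 0 \<and> tdist E (f z) x z \<noteq> tdist E (f z) y z))"

definition bdim :: "'a set \<Rightarrow> ('a \<times> 'a) set \<Rightarrow> nat" where
  "bdim V E = (LEAST n. \<exists>f. resolving_broadcast V E f \<and> (\<Sum>v\<in>V. f v) = n)"

end

theory Submission
  imports Defs
begin

text \<open>
  Let \<open>G\<^sub>m\<close> consist of a hub adjacent to all other vertices, \<open>m\<close> bit vertices and
  \<open>2^m\<close> code vertices, the code vertex of \<open>i < 2^m\<close> being adjacent to the \<open>j\<close>-th bit vertex
  iff bit \<open>j\<close> of \<open>i\<close> is set, and let \<open>H\<^sub>m\<close> be the star formed by the hub and the code vertices.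
  In \<open>G\<^sub>m\<close> the hub and the bit vertices form an adjacency resolving set, since the bit vertices
  read off the binary expansion of a code vertex; so all three dimensions of \<open>G\<^sub>m\<close> are at
  most \<open>m + 1\<close>. In \<open>H\<^sub>m\<close> the \<open>2^m\<close> leaves are pairwise twins, so every resolving set contains
  all leaves but one and \<open>dim(H\<^sub>m) \<ge> 2^m - 1\<close>. As \<open>dim \<le> bdim \<le> adim\<close> holds in every
  connected graph, all three ratios exceed \<open>(2^m - 1) / (m + 1)\<close>, which is unbounded.
\<close>

lemma gdist_refl [simp]: "gdist E x x = 0"
  unfolding gdist_def by (rule Least_eq_0) simp

lemma gdist_pos:
  assumes "(x, y) \<in> E\<^sup>*" "x \<noteq> y"
  shows "0 < gdist E x y"
proof -
  obtain n where "(x, y) \<in> E ^^ n" using assms(1) rtrancl_power by blast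
  then have "(x, y) \<in> E ^^ gdist E x y" unfolding gdist_def by (rule LeastI)
  then show ?thesis using assms(2) by (cases "gdist E x y") auto
qed

lemma gdist_eq_1:
  assumes "x \<noteq> y" "(x, y) \<in> E"
  shows "gdist E x y = 1"
  unfolding gdist_def
proof (rule Least_equality)
  fix n assume "(x, y) \<in> E ^^ n"
  then show "1 \<le> n" using assms(1) by (cases n) auto
qed (use assms in simp)

lemma gdist_eq_2:
  assumes "x \<noteq> y" "(x, y) \<notin> E" "(x, w) \<in> E" "(w, y) \<in> E"
  shows "gdist E x y = 2"
  unfolding gdist_def
proof (rule Least_equality)
  show "(x, y) \<in> E ^^ 2" using assms(3,4) by (auto simp: numeral_2_eq_2)
  fix n assume "(x, y) \<in> E ^^ n"
  then show "2 \<le> n" using assms(1,2) by (cases "n < 2") (auto simp: less_2_cases_iff)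
qed

lemma connected_graph_rtrancl:
  "connected_graph V E \<Longrightarrow> x \<in> V \<Longrightarrow> y \<in> V \<Longrightarrow> (x, y) \<in> E\<^sup>*"
  unfolding connected_graph_def by blast

lemma connected_graph_finite: "connected_graph V E \<Longrightarrow> finite V"
  unfolding connected_graph_def sgraph_def by blast

lemma adj_resolving_setI:
  assumes "connected_graph V E" "A \<subseteq> V"
    and outside: "\<And>x y. x \<in> V \<Longrightarrow> y \<in> V \<Longrightarrow> x \<noteq> y \<Longrightarrow> x \<notin> A \<Longrightarrow> y \<notin> A \<Longrightarrow>
      \<exists>z\<in>A. tdist E 1 x z \<noteq> tdist E 1 y z"
  shows "adj_resolving_set V E A"
  unfolding adj_resolving_set_def
proof (intro conjI ballI impI)
  fix x y assume xy: "x \<in> V" "y \<in> V" "x \<noteq> y"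
  show "\<exists>z\<in>A. tdist E 1 x z \<noteq> tdist E 1 y z"
  proof (cases "x \<in> A \<or> y \<in> A")
    case True
    then obtain a where a: "a \<in> A" "a = x \<or> a = y" by blast
    have "0 < gdist E x y" "0 < gdist E y x"
      using xy by (auto intro!: gdist_pos connected_graph_rtrancl[OF assms(1)])
    then have "tdist E 1 x a \<noteq> tdist E 1 y a" using a(2) xy(3) by (auto simp: tdist_def)
    with a(1) show ?thesis by blast
  qed (use xy outside in blast)
qed (fact assms(2))

lemma adj_resolving_set_self: "connected_graph V E \<Longrightarrow> adj_resolving_set V E V"
  by (rule adj_resolving_setI) auto

lemma resolving_set_if_adj_resolving_set:
  "adj_resolving_set V E A \<Longrightarrow> resolving_set V E A"
  unfolding adj_resolving_set_def resolving_set_def tdist_def by metis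

lemma resolving_broadcast_indicator:
  assumes "adj_resolving_set V E A"
  shows "resolving_broadcast V E (\<lambda>v. if v \<in> A then 1 else 0)"
  using assms unfolding adj_resolving_set_def resolving_broadcast_def by fastforce

lemma resolving_set_broadcast_support:
  assumes "resolving_broadcast V E f"
  shows "resolving_set V E {v \<in> V. 0 < f v}"
  using assms unfolding resolving_broadcast_def resolving_set_def tdist_def by fastforce

lemma mdim_le_card: "resolving_set V E S \<Longrightarrow> mdim V E \<le> card S"
  unfolding mdim_def by (rule Least_le) blast

lemma adim_le_card: "adj_resolving_set V E A \<Longrightarrow> adim V E \<le> card A"
  unfolding adim_def by (rule Least_le) blast

lemma bdim_le_sum: "resolving_broadcast V E f \<Longrightarrow> bdim V E \<le> (\<Sum>v\<in>V. f v)"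
  unfolding bdim_def by (rule Least_le) blast

lemma mdim_attained:
  assumes "connected_graph V E"
  obtains S where "resolving_set V E S" "card S = mdim V E"
proof -
  have "\<exists>S. resolving_set V E S \<and> card S = mdim V E"
    unfolding mdim_def by (rule LeastI_ex)
      (use resolving_set_if_adj_resolving_set[OF adj_resolving_set_self[OF assms]] in blast)
  with that show thesis by blast
qed

lemma adim_attained:
  assumes "connected_graph V E"
  obtains A where "adj_resolving_set V E A" "card A = adim V E"
proof -
  have "\<exists>A. adj_resolving_set V E A \<and> card A = adim V E"
    unfolding adim_def by (rule LeastI_ex) (use adj_resolving_set_self[OF assms] in blast)
  with that show thesis by blast
qed

lemma bdim_attained:
  assumes "connected_graph V E"
  obtains f where "resolving_broadcast V E f" "(\<Sum>v\<in>V. f v) = bdim V E"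
proof -
  have "\<exists>f. resolving_broadcast V E f \<and> (\<Sum>v\<in>V. f v) = bdim V E"
    unfolding bdim_def by (rule LeastI_ex)
      (use resolving_broadcast_indicator[OF adj_resolving_set_self[OF assms]] in blast)
  with that show thesis by blast
qed

lemma mdim_le_bdim:
  assumes "connected_graph V E"
  shows "mdim V E \<le> bdim V E"
proof -
  obtain f where f: "resolving_broadcast V E f" "(\<Sum>v\<in>V. f v) = bdim V E"
    using bdim_attained[OF assms] .
  define T where "T = {v \<in> V. 0 < f v}"
  have "finite V" using connected_graph_finite[OF assms] .
  have "mdim V E \<le> card T"
    unfolding T_def by (rule mdim_le_card[OF resolving_set_broadcast_support[OF f(1)]])
  also have "\<dots> = (\<Sum>v\<in>T. 1)" by simp
  also have "\<dots> \<le> (\<Sum>v\<in>T. f v)" by (rule sum_mono) (auto simp: T_def)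
  also have "\<dots> \<le> (\<Sum>v\<in>V. f v)" by (rule sum_mono2[OF \<open>finite V\<close>]) (auto simp: T_def)
  finally show ?thesis using f(2) by simp
qed

lemma bdim_le_adim:
  assumes "connected_graph V E"
  shows "bdim V E \<le> adim V E"
proof -
  obtain A where A: "adj_resolving_set V E A" "card A = adim V E"
    using adim_attained[OF assms] .
  have "A \<subseteq> V" using A(1) unfolding adj_resolving_set_def by blast
  then have "(\<Sum>v\<in>V. if v \<in> A then 1 else 0) = card A"
    using connected_graph_finite[OF assms] by (simp add: sum.If_cases Int_absorb1)
  then show ?thesis using bdim_le_sum[OF resolving_broadcast_indicator[OF A(1)]] A(2) by simp
qed

lemma mdim_pos:
  assumes "connected_graph V E" "x \<in> V" "y \<in> V" "x \<noteq> y"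
  shows "0 < mdim V E"
proof -
  obtain S where S: "resolving_set V E S" "card S = mdim V E"
    using mdim_attained[OF assms(1)] .
  have "finite S" "S \<noteq> {}"
    using S(1) assms connected_graph_finite[OF assms(1)] finite_subset
    unfolding resolving_set_def by blast+
  then show ?thesis using S(2) by auto
qed

definition twins :: "'a set \<Rightarrow> ('a \<times> 'a) set \<Rightarrow> 'a \<Rightarrow> 'a \<Rightarrow> bool" where
  "twins V E x y \<longleftrightarrow> (\<forall>z \<in> V - {x, y}. gdist E x z = gdist E y z)"

lemma resolving_set_meets_twins:
  "resolving_set V E S \<Longrightarrow> twins V E x y \<Longrightarrow> x \<in> V \<Longrightarrow> y \<in> V \<Longrightarrow> x \<noteq> y \<Longrightarrow> x \<in> S \<or> y \<in> S"
  unfolding resolving_set_def twins_def by blast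

lemma card_le_Suc_card_if_meets_pairs:
  assumes "finite T" "\<And>x y. x \<in> L \<Longrightarrow> y \<in> L \<Longrightarrow> x \<noteq> y \<Longrightarrow> x \<in> T \<or> y \<in> T"
  shows "card L \<le> card T + 1"
proof (cases "finite L")
  case True
  have "card L \<le> card (L \<inter> T) + card (L - T)"
    by (metis Int_Diff_Un card_Un_le)
  moreover have "card (L \<inter> T) \<le> card T" using assms(1) by (simp add: card_mono)
  moreover have "card (L - T) \<le> Suc 0" using True assms(2) by (subst card_le_Suc0_iff_eq) auto
  ultimately show ?thesis by linarith
qed simp

lemma card_twins_le_Suc_mdim:
  assumes "connected_graph V E" "L \<subseteq> V"
    and "\<And>x y. x \<in> L \<Longrightarrow> y \<in> L \<Longrightarrow> x \<noteq> y \<Longrightarrow> twins V E x y"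
  shows "card L \<le> mdim V E + 1"
proof -
  obtain S where S: "resolving_set V E S" "card S = mdim V E"
    using mdim_attained[OF assms(1)] .
  have "finite S"
    using S(1) connected_graph_finite[OF assms(1)] finite_subset
    unfolding resolving_set_def by blast
  then have "card L \<le> card S + 1"
    using resolving_set_meets_twins[OF S(1)] assms(2,3)
    by (intro card_le_Suc_card_if_meets_pairs) blast+
  then show ?thesis using S(2) by simp
qed

definition hub_edges :: "'a \<Rightarrow> 'a set \<Rightarrow> ('a \<Rightarrow> 'a \<Rightarrow> bool) \<Rightarrow> ('a \<times> 'a) set" where
  "hub_edges c V P = {(u, v). u \<in> V \<and> v \<in> V \<and> u \<noteq> v \<and> (u = c \<or> v = c \<or> P u v \<or> P v u)}"

lemma sgraph_hub_edges: "finite V \<Longrightarrow> sgraph V (hub_edges c V P)"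
  unfolding sgraph_def hub_edges_def sym_def by blast

lemma connected_graph_hub_edges:
  assumes "finite V" "c \<in> V"
  shows "connected_graph V (hub_edges c V P)"
  unfolding connected_graph_def
proof (intro conjI ballI)
  have to_hub: "(x, c) \<in> (hub_edges c V P)\<^sup>*" "(c, x) \<in> (hub_edges c V P)\<^sup>*" if "x \<in> V" for x
    using that assms(2) by (cases "x = c"; force simp: hub_edges_def)+
  fix x y assume "x \<in> V" "y \<in> V"
  then show "(x, y) \<in> (hub_edges c V P)\<^sup>*" using to_hub rtrancl_trans by metis
qed (use assms sgraph_hub_edges in auto)

lemma subgraph_hub_edges:
  assumes "finite V'" "V \<subseteq> V'" "\<And>u v. P u v \<Longrightarrow> Q u v"
  shows "subgraph V (hub_edges c V P) V' (hub_edges c V' Q)"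
proof -
  have "finite V" using assms(1,2) by (rule finite_subset[rotated])
  moreover have "hub_edges c V P \<subseteq> hub_edges c V' Q" using assms(2,3) by (auto simp: hub_edges_def)
  ultimately show ?thesis using assms(1,2) by (simp add: subgraph_def sgraph_hub_edges)
qed

lemma gdist_hub_edges:
  assumes "c \<in> V" "x \<in> V" "y \<in> V" "x \<noteq> y"
  shows "gdist (hub_edges c V P) x y = (if (x, y) \<in> hub_edges c V P then 1 else 2)"
proof (cases "(x, y) \<in> hub_edges c V P")
  case False
  then have "(x, c) \<in> hub_edges c V P" "(c, y) \<in> hub_edges c V P"
    using assms unfolding hub_edges_def by auto
  with False show ?thesis using gdist_eq_2 assms(4) by simp
qed (simp add: gdist_eq_1 assms(4))

text \<open>Hub \<open>0\<close>, bit vertices \<open>1, \<dots>, m\<close>, and code vertex \<open>m + 1 + i\<close> for \<open>i < 2^m\<close>.\<close>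

definition code_verts :: "nat \<Rightarrow> nat set" where
  "code_verts m = {m + 1 ..< m + 1 + 2 ^ m}"

definition bitvec_verts :: "nat \<Rightarrow> nat set" where
  "bitvec_verts m = {0 ..< m + 1 + 2 ^ m}"

definition bitvec_edges :: "nat \<Rightarrow> (nat \<times> nat) set" where
  "bitvec_edges m = hub_edges 0 (bitvec_verts m)
     (\<lambda>u v. 1 \<le> u \<and> u \<le> m \<and> m + 1 \<le> v \<and> bit (v - (m + 1)) (u - 1))"

definition star_verts :: "nat \<Rightarrow> nat set" where
  "star_verts m = insert 0 (code_verts m)"

definition star_edges :: "nat \<Rightarrow> (nat \<times> nat) set" where
  "star_edges m = hub_edges 0 (star_verts m) (\<lambda>_ _. False)"

lemma connected_graph_bitvec: "connected_graph (bitvec_verts m) (bitvec_edges m)"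
  unfolding bitvec_verts_def bitvec_edges_def by (rule connected_graph_hub_edges) auto

lemma connected_graph_star: "connected_graph (star_verts m) (star_edges m)"
  unfolding star_verts_def star_edges_def code_verts_def
  by (rule connected_graph_hub_edges) auto

lemma subgraph_star_bitvec:
  "subgraph (star_verts m) (star_edges m) (bitvec_verts m) (bitvec_edges m)"
  unfolding star_verts_def star_edges_def bitvec_verts_def bitvec_edges_def code_verts_def
  by (rule subgraph_hub_edges) auto

lemma bit_index_less: "(i::nat) < 2 ^ m \<Longrightarrow> bit i j \<Longrightarrow> j < m"
  by (metis bit_take_bit_iff take_bit_nat_eq_self)

lemma adj_resolving_set_bitvec: "adj_resolving_set (bitvec_verts m) (bitvec_edges m) {0..m}"
proof (rule adj_resolving_setI[OF connected_graph_bitvec])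
  show "{0..m} \<subseteq> bitvec_verts m" unfolding bitvec_verts_def by auto
  fix x y assume xy: "x \<in> bitvec_verts m" "y \<in> bitvec_verts m" "x \<noteq> y" "x \<notin> {0..m}" "y \<notin> {0..m}"
  have "x - (m + 1) \<noteq> y - (m + 1)" using xy by auto
  then obtain j where j: "bit (x - (m + 1)) j \<noteq> bit (y - (m + 1)) j" using bit_eq_iff by blast
  moreover have "x - (m + 1) < 2 ^ m" "y - (m + 1) < 2 ^ m" using xy by (auto simp: bitvec_verts_def)
  ultimately have "j < m" using bit_index_less by blast
  have tdist_code: "tdist (bitvec_edges m) 1 w (j + 1) = (if bit (w - (m + 1)) j then 1 else 2)"
    if "w \<in> bitvec_verts m" "w \<notin> {0..m}" for w
    using that \<open>j < m\<close> gdist_hub_edges[of 0 "bitvec_verts m" w "j + 1"]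
    unfolding tdist_def bitvec_edges_def by (auto simp: hub_edges_def bitvec_verts_def)
  show "\<exists>z\<in>{0..m}. tdist (bitvec_edges m) 1 x z \<noteq> tdist (bitvec_edges m) 1 y z"
    using tdist_code[OF xy(1,4)] tdist_code[OF xy(2,5)] j \<open>j < m\<close>
    by (intro bexI[of _ "j + 1"]) auto
qed

lemma twins_star:
  assumes "x \<in> code_verts m" "y \<in> code_verts m"
  shows "twins (star_verts m) (star_edges m) x y"
  unfolding twins_def
proof
  fix z assume "z \<in> star_verts m - {x, y}"
  with assms show "gdist (star_edges m) x z = gdist (star_edges m) y z"
    using gdist_hub_edges[of 0 "star_verts m" _ z "\<lambda>_ _. False"]
    by (auto simp: star_verts_def star_edges_def hub_edges_def code_verts_def)
qed

lemma square_Suc_le_power_two: "6 \<le> m \<Longrightarrow> (m + 1) ^ 2 \<le> (2::nat) ^ m"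
proof (induction m rule: dec_induct)
  case (step n)
  have "6 * 6 \<le> n * n" using step(1) mult_le_mono by blast
  then have "(Suc n + 1) ^ 2 \<le> 2 * (n + 1) ^ 2" by (simp add: power2_eq_square algebra_simps)
  also have "\<dots> \<le> 2 * 2 ^ n" using step(3) by simp
  finally show ?case by simp
qed simp

lemma ex_linear_less_power_two: "\<exists>m. M * (real m + 1) < 2 ^ m - 1"
proof -
  define m where "m = max 6 (nat \<lceil>M\<rceil> + 1)"
  have "6 \<le> m" "M < real m" unfolding m_def by linarith+
  have "real ((m + 1) ^ 2) \<le> real (2 ^ m)"
    using square_Suc_le_power_two[OF \<open>6 \<le> m\<close>] by linarith
  then have "(real m + 1) ^ 2 \<le> 2 ^ m" by (simp add: add.commute)
  have "M * (real m + 1) < real m * (real m + 1)"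
    using \<open>M < real m\<close> by (intro mult_strict_right_mono) auto
  also have "\<dots> \<le> (real m + 1) ^ 2 - 1" by (simp add: power2_eq_square algebra_simps)
  also have "\<dots> \<le> 2 ^ m - 1" using \<open>(real m + 1) ^ 2 \<le> 2 ^ m\<close> by simp
  finally show ?thesis by blast
qed

lemma less_ratio_if_bounds:
  assumes "0 < M" "M * (real m + 1) < 2 ^ m - 1"
    and "1 \<le> g" "g \<le> m + 1" "2 ^ m \<le> h + (1::nat)"
  shows "M < real h / real g"
proof -
  have "M * real g \<le> M * (real m + 1)" using assms(1,4) by (intro mult_left_mono) auto
  moreover have "real (2 ^ m) \<le> real h + 1" using assms(5) by linarith
  then have "2 ^ m \<le> real h + 1" by simp
  ultimately have "M * real g < real h" using assms(2) by linarith
  then show ?thesis using assms(3) by (simp add: pos_less_divide_eq)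
qed

theorem theorem5p7:
  fixes M :: real
  assumes "M > 0"
  shows "\<exists>(VG :: nat set) EG VH EH.
           connected_graph VG EG \<and> connected_graph VH EH \<and> subgraph VH EH VG EG \<and>
           real (mdim VH EH) / real (mdim VG EG) > M \<and>
           real (bdim VH EH) / real (bdim VG EG) > M \<and>
           real (adim VH EH) / real (adim VG EG) > M"
proof -
  obtain m where m: "M * (real m + 1) < 2 ^ m - 1" using ex_linear_less_power_two by blast
  let ?VG = "bitvec_verts m" and ?EG = "bitvec_edges m"
  let ?VH = "star_verts m" and ?EH = "star_edges m"
  have G: "connected_graph ?VG ?EG" and H: "connected_graph ?VH ?EH"
    by (rule connected_graph_bitvec connected_graph_star)+
  have "0 < mdim ?VG ?EG" by (rule mdim_pos[OF G, of 0 1]) (auto simp: bitvec_verts_def)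
  moreover have "adim ?VG ?EG \<le> m + 1" using adim_le_card[OF adj_resolving_set_bitvec] by simp
  moreover have "card (code_verts m) \<le> mdim ?VH ?EH + 1"
    using card_twins_le_Suc_mdim[OF H] twins_star subset_insertI unfolding star_verts_def by metis
  moreover note mdim_le_bdim[OF G] bdim_le_adim[OF G] mdim_le_bdim[OF H] bdim_le_adim[OF H]
  ultimately have "M < real (mdim ?VH ?EH) / real (mdim ?VG ?EG)"
    "M < real (bdim ?VH ?EH) / real (bdim ?VG ?EG)"
    "M < real (adim ?VH ?EH) / real (adim ?VG ?EG)"
    by (auto simp: code_verts_def intro!: less_ratio_if_bounds[OF assms m])
  with G H subgraph_star_bitvec show ?thesis by blast
qed

end
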